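(* Fix $h\in\mathbb{N}$, $\alpha\in(0,1)$ and $a\in(0,1/2)$, and let $\varepsilon=n^{-a}$. Let $S$ be any Steiner triple system of order $n$, and order its hyperedges uniformly at random to obtain an ordered Steiner triple system $\mathbf{S}\in\mathcal{O}$. Then \[ \Pr\left(\mathbf{S}_{\alpha N}\notin\mathcal{O}^{\varepsilon,h}_{\alpha N}\right)=\exp\left(-\Omega\left(n^{1-2a}\right)\right). \]
   Context: Throughout, $n\equiv1$ or $3\pmod 6$, $N=\binom n2/3$, quantities like $\alpha N$ are treated as integers, and asymptotics are as $n\to\infty$. A partial system is a 3-uniform hypergraph on $[n]$ in which every pair lies in at most one hyperedge; $\mathcal{O}$ is the set of ordered Steiner triple systems and $\mathcal{O}_m$ the set of ordered partial systems with $m$ hyperedges; $S_i$ denotes the first $i$ hyperedges of an ordered system $S$. $G(S)$ is the graph on $[n]$ of pairs not covered by any hyperedge of $S$. For a graph $G$ with $n$ vertices and $m$ edges, $d(G)=m/\binom n2$; $G$ is $(\varepsilon,h)$-quasirandom if every set $A$ of at most $h$ vertices satisfies $\left|\bigcap_{w\in A}N_G(w)\right|=(1\pm\varepsilon)d(G)^{|A|}n$. $\mathcal{O}^{\varepsilon,h}_m$ is the set of $S\in\mathcal{O}_m$ such that $G(S_i)$ is $(\varepsilon,h)$-quasirandom for all $i\le m$. *)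

theory Defs
  imports "HOL-Probability.Probability"
begin

text \<open>Vertex set [n] is rendered as {..<n}. Hyperedges are 3-element sets of vertices.\<close>

definition partial_system :: "nat \<Rightarrow> nat set set \<Rightarrow> bool" where
  "partial_system n H \<longleftrightarrow>
     (\<forall>e\<in>H. e \<subseteq> {..<n} \<and> card e = 3) \<and>
     (\<forall>u<n. \<forall>v<n. u \<noteq> v \<longrightarrow> card {e\<in>H. {u, v} \<subseteq> e} \<le> 1)"

definition steiner_triple_system :: "nat \<Rightarrow> nat set set \<Rightarrow> bool" where
  "steiner_triple_system n S \<longleftrightarrow>
     (\<forall>e\<in>S. e \<subseteq> {..<n} \<and> card e = 3) \<and>
     (\<forall>u<n. \<forall>v<n. u \<noteq> v \<longrightarrow> (\<exists>!e. e \<in> S \<and> {u, v} \<subseteq> e))"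

definition orderings :: "nat set set \<Rightarrow> nat set list set" where
  "orderings S = {xs. distinct xs \<and> set xs = S}"

definition leave_adj :: "nat \<Rightarrow> nat set list \<Rightarrow> nat \<Rightarrow> nat \<Rightarrow> bool" where
  "leave_adj n xs u v \<longleftrightarrow> u < n \<and> v < n \<and> u \<noteq> v \<and> \<not> (\<exists>e\<in>set xs. {u, v} \<subseteq> e)"

definition leave_edges :: "nat \<Rightarrow> nat set list \<Rightarrow> nat set set" where
  "leave_edges n xs = {{u, v} | u v. leave_adj n xs u v}"

definition leave_density :: "nat \<Rightarrow> nat set list \<Rightarrow> real" where
  "leave_density n xs = real (card (leave_edges n xs)) / real (n choose 2)"

definition common_nbhd :: "nat \<Rightarrow> nat set list \<Rightarrow> nat set \<Rightarrow> nat set" where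
  "common_nbhd n xs A = {v. v < n \<and> (\<forall>w\<in>A. leave_adj n xs w v)}"

definition quasirandom :: "real \<Rightarrow> nat \<Rightarrow> nat \<Rightarrow> nat set list \<Rightarrow> bool" where
  "quasirandom eps h n xs \<longleftrightarrow>
     (\<forall>A. A \<subseteq> {..<n} \<and> card A \<le> h \<longrightarrow>
        (1 - eps) * leave_density n xs ^ card A * real n \<le> real (card (common_nbhd n xs A)) \<and>
        real (card (common_nbhd n xs A)) \<le> (1 + eps) * leave_density n xs ^ card A * real n)"

definition in_O_qr :: "real \<Rightarrow> nat \<Rightarrow> nat \<Rightarrow> nat \<Rightarrow> nat set list \<Rightarrow> bool" where
  "in_O_qr eps h n m xs \<longleftrightarrow>
     distinct xs \<and> length xs = m \<and> partial_system n (set xs) \<and>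
     (\<forall>i\<le>m. quasirandom eps h n (take i xs))"

definition alphaN :: "real \<Rightarrow> nat \<Rightarrow> nat" where
  "alphaN \<alpha> n = nat \<lfloor>\<alpha> * (real (n choose 2) / 3)\<rfloor>"

end

theory Submission
  imports Defs
begin

text \<open>The first i triples of a uniformly random ordering form a uniformly random i-subset T
  of the system. For a fixed vertex set A with |A| = k, the number of common neighbours of A in
  the leave of T is a sum, over the vertices v outside A, of the indicators that T avoids the k
  triples joining v to A; its mean is n d^k up to O(k^2), where d = 1 - i / |S| is the density of
  the leave. Avoidance events of pairwise disjoint families of triples are negatively
  correlated, which gives Hoeffding's exponential moment bound for such families, and a proper
  colouring of the vertices with 3k + 1 colours splits the sum into such families. Hence each
  pair (i, A) fails with probability exp(-\<Omega>(\<epsilon>^2 n)), and a union bound over the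
  polynomially many pairs gives the theorem.\<close>

section \<open>Uniform random subsets\<close>

definition subsets_of_size :: "'a set \<Rightarrow> nat \<Rightarrow> 'a set set" where
  "subsets_of_size G i = {T. T \<subseteq> G \<and> card T = i}"

definition subset_avg :: "'a set \<Rightarrow> nat \<Rightarrow> ('a set \<Rightarrow> real) \<Rightarrow> real" where
  "subset_avg G i F = (\<Sum>T\<in>subsets_of_size G i. F T) / real (card (subsets_of_size G i))"

definition avoid_ind :: "'a set \<Rightarrow> 'a set \<Rightarrow> real" where
  "avoid_ind B T = (if B \<inter> T = {} then 1 else 0)"

lemma finite_subsets_of_size [simp]: "finite G \<Longrightarrow> finite (subsets_of_size G i)"
  unfolding subsets_of_size_def by (rule finite_subset[of _ "Pow G"]) auto

lemma card_subsets_of_size: "finite G \<Longrightarrow> card (subsets_of_size G i) = card G choose i"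
  unfolding subsets_of_size_def using n_subsets by blast

lemma subsets_of_sizeD:
  "finite G \<Longrightarrow> T \<in> subsets_of_size G i \<Longrightarrow> finite T \<and> T \<subseteq> G \<and> card T = i"
  unfolding subsets_of_size_def using finite_subset by auto

lemma subsets_of_size_0: "finite G \<Longrightarrow> subsets_of_size G 0 = {{}}"
  unfolding subsets_of_size_def by (auto dest: finite_subset)

lemma subsets_of_size_Diff: "subsets_of_size (G - B) i = {T \<in> subsets_of_size G i. B \<inter> T = {}}"
  unfolding subsets_of_size_def by auto

lemma subsets_of_size_Suc:
  assumes fin: "finite G" and x: "x \<in> G"
  shows "subsets_of_size G (Suc j) =
           subsets_of_size (G - {x}) (Suc j) \<union> insert x ` subsets_of_size (G - {x}) j"
    and "subsets_of_size (G - {x}) (Suc j) \<inter> insert x ` subsets_of_size (G - {x}) j = {}"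
proof -
  have "T \<in> insert x ` subsets_of_size (G - {x}) j"
    if T: "T \<in> subsets_of_size G (Suc j)" "x \<in> T" for T
  proof
    show "T = insert x (T - {x})" using T(2) by auto
    have "finite T" using T(1) subsets_of_sizeD[OF fin] by blast
    then show "T - {x} \<in> subsets_of_size (G - {x}) j"
      using T by (auto simp: subsets_of_size_def)
  qed
  moreover have "insert x U \<in> subsets_of_size G (Suc j)" if U: "U \<in> subsets_of_size (G - {x}) j" for U
  proof -
    have "finite U" using U subsets_of_sizeD[of "G - {x}"] fin by blast
    then show ?thesis using U x by (auto simp: subsets_of_size_def card_insert_if)
  qed
  ultimately show "subsets_of_size G (Suc j) =
           subsets_of_size (G - {x}) (Suc j) \<union> insert x ` subsets_of_size (G - {x}) j"
    unfolding subsets_of_size_def by blast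
  show "subsets_of_size (G - {x}) (Suc j) \<inter> insert x ` subsets_of_size (G - {x}) j = {}"
    by (auto simp: subsets_of_size_def)
qed

lemma sum_subsets_of_size_le_Suc:
  fixes F :: "'a set \<Rightarrow> real"
  assumes fin: "finite H" and mono: "\<And>T T'. T \<subseteq> T' \<Longrightarrow> F T \<le> F T'"
  shows "real (card H - j) * (\<Sum>T\<in>subsets_of_size H j. F T)
           \<le> real (Suc j) * (\<Sum>T\<in>subsets_of_size H (Suc j). F T)"
proof -
  let ?S = "subsets_of_size H"
  have "real (card H - j) * (\<Sum>T\<in>?S j. F T) = (\<Sum>T\<in>?S j. \<Sum>y\<in>H-T. F T)"
    by (simp add: sum_distrib_left) (intro sum.cong refl,
        metis card_Diff_subset fin subsets_of_sizeD mult.commute of_nat_diff)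
  also have "\<dots> \<le> (\<Sum>T\<in>?S j. \<Sum>y\<in>H-T. F (insert y T))"
    by (intro sum_mono mono) auto
  also have "\<dots> = (\<Sum>p\<in>Sigma (?S j) (\<lambda>T. H-T). F (insert (snd p) (fst p)))"
    by (subst sum.Sigma) (auto simp: fin split_beta)
  also have "\<dots> = (\<Sum>p\<in>Sigma (?S (Suc j)) (\<lambda>T. T). F (fst p))"
  proof (rule sum.reindex_bij_witness[where i="\<lambda>p. (fst p - {snd p}, snd p)"
        and j="\<lambda>p. (insert (snd p) (fst p), snd p)"], goal_cases)
    case (1 a)
    then obtain T y where "a = (T, y)" "y \<notin> T" by (cases a) auto
    then show ?case by simp
  next
    case (2 a)
    then obtain T y where a: "a = (T, y)" "T \<in> ?S j" "y \<in> H" "y \<notin> T" by (cases a) auto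
    have "finite T" using a(2) subsets_of_sizeD[OF fin] by blast
    then show ?case using a unfolding subsets_of_size_def by simp
  next
    case (3 b)
    then obtain T y where "b = (T, y)" "y \<in> T" by (cases b) auto
    then show ?case by (simp add: insert_absorb)
  next
    case (4 b)
    then obtain T y where b: "b = (T, y)" "T \<in> ?S (Suc j)" "y \<in> T" by (cases b) auto
    have "finite T" "T \<subseteq> H" "card T = Suc j" using b(2) subsets_of_sizeD[OF fin] by blast+
    then show ?case using b unfolding subsets_of_size_def by auto
  next
    case (5 a)
    then show ?case by (simp add: split_beta)
  qed
  also have "\<dots> = (\<Sum>T\<in>?S (Suc j). \<Sum>y\<in>T. F T)"
    by (subst sum.Sigma) (auto simp: fin split_beta dest: subsets_of_sizeD[OF fin])
  also have "\<dots> = real (Suc j) * (\<Sum>T\<in>?S (Suc j). F T)"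
    by (simp add: sum_distrib_left) (intro sum.cong refl, simp add: subsets_of_size_def)
  finally show ?thesis .
qed

lemma subset_avg_le_Suc:
  fixes F :: "'a set \<Rightarrow> real"
  assumes fin: "finite H" and j: "j < card H" and mono: "\<And>T T'. T \<subseteq> T' \<Longrightarrow> F T \<le> F T'"
  shows "subset_avg H j F \<le> subset_avg H (Suc j) F"
proof -
  let ?M = "card H"
  have count: "real (?M choose j) * real (?M - j) = real (?M choose Suc j) * real (Suc j)"
  proof -
    obtain m where m: "?M = Suc m" using j by (cases ?M) auto
    have "(?M - j) * (?M choose j) = ?M * ((?M - 1) choose j)" by (rule binomial_absorb_comp)
    also have "\<dots> = (?M choose Suc j) * Suc j" using Suc_times_binomial_eq[of m j] m by simp
    finally show ?thesis by (metis mult.commute of_nat_mult)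
  qed
  have "subset_avg H j F = (real (?M - j) * (\<Sum>T\<in>subsets_of_size H j. F T))
                             / (real (?M choose j) * real (?M - j))"
    using j by (simp add: subset_avg_def card_subsets_of_size fin)
  also have "\<dots> \<le> (real (Suc j) * (\<Sum>T\<in>subsets_of_size H (Suc j). F T))
                  / (real (?M choose Suc j) * real (Suc j))"
    unfolding count using sum_subsets_of_size_le_Suc[OF fin mono, where j=j] j
    by (intro divide_right_mono) auto
  also have "\<dots> = subset_avg H (Suc j) F"
    by (simp add: subset_avg_def card_subsets_of_size fin)
  finally show ?thesis .
qed

lemma subset_avg_le_remove:
  fixes F :: "'a set \<Rightarrow> real"
  assumes fin: "finite G" and x: "x \<in> G" and i: "i < card G"
    and mono: "\<And>T T'. T \<subseteq> T' \<Longrightarrow> F T \<le> F T'"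
    and indep: "\<And>T. F (insert x T) = F T"
  shows "subset_avg G i F \<le> subset_avg (G - {x}) i F"
proof (cases i)
  case 0
  then show ?thesis using fin by (simp add: subset_avg_def subsets_of_size_0)
next
  case (Suc j)
  let ?G' = "G - {x}" and ?S = "subsets_of_size (G - {x})"
  have finG': "finite ?G'" using fin by simp
  have cG': "card ?G' = card G - 1" using x fin by simp
  have j: "j < card ?G'" using i Suc cG' by simp
  define S1 where "S1 = (\<Sum>T\<in>?S (Suc j). F T)"
  define S0 where "S0 = (\<Sum>T\<in>?S j. F T)"
  define c1 where "c1 = real (card (?S (Suc j)))"
  define c0 where "c0 = real (card (?S j))"
  have c1pos: "c1 > 0" unfolding c1_def card_subsets_of_size[OF finG'] using i Suc cG' by simp
  have c0pos: "c0 > 0" unfolding c0_def card_subsets_of_size[OF finG'] using j by simp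
  have sumG: "(\<Sum>T\<in>subsets_of_size G (Suc j). F T) = S1 + S0"
  proof -
    have "(\<Sum>T\<in>subsets_of_size G (Suc j). F T) = S1 + (\<Sum>T\<in>insert x ` ?S j. F T)"
      unfolding S1_def subsets_of_size_Suc(1)[OF fin x]
      by (rule sum.union_disjoint) (use fin subsets_of_size_Suc(2)[OF fin x] in auto)
    also have "(\<Sum>T\<in>insert x ` ?S j. F T) = S0"
      unfolding S0_def by (subst sum.reindex) (auto simp: inj_on_def indep subsets_of_size_def)
    finally show ?thesis .
  qed
  have cardG: "real (card (subsets_of_size G (Suc j))) = c1 + c0"
  proof -
    obtain m where m: "card G = Suc m" using i by (cases "card G") auto
    show ?thesis
      unfolding c1_def c0_def card_subsets_of_size[OF fin] card_subsets_of_size[OF finG'] cG' m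
      by simp
  qed
  have "S0 / c0 \<le> S1 / c1"
    using subset_avg_le_Suc[OF finG' j mono] unfolding subset_avg_def S0_def S1_def c0_def c1_def .
  then have "(S1 + S0) / (c1 + c0) \<le> S1 / c1" using c0pos c1pos by (simp add: field_simps)
  then show ?thesis unfolding subset_avg_def Suc sumG cardG S1_def c1_def .
qed

lemma subset_avg_Un_le:
  fixes F :: "'a set \<Rightarrow> real"
  assumes finD: "finite D" and fin: "finite G" and disj: "G \<inter> D = {}" and i: "i \<le> card G"
    and mono: "\<And>T T'. T \<subseteq> T' \<Longrightarrow> F T \<le> F T'"
    and indep: "\<And>x T. x \<in> D \<Longrightarrow> F (insert x T) = F T"
  shows "subset_avg (G \<union> D) i F \<le> subset_avg G i F"
  using finD disj indep
proof (induction D rule: finite_induct)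
  case empty
  then show ?case by simp
next
  case (insert x D)
  have "card G < card (G \<union> insert x D)"
    using insert fin by (intro psubset_card_mono) auto
  have "subset_avg (G \<union> insert x D) i F \<le> subset_avg ((G \<union> insert x D) - {x}) i F"
    by (rule subset_avg_le_remove) (use fin insert i mono \<open>card G < _\<close> in auto)
  also have "(G \<union> insert x D) - {x} = G \<union> D" using insert by auto
  also have "subset_avg (G \<union> D) i F \<le> subset_avg G i F" using insert by auto
  finally show ?case .
qed

lemma subset_avg_add: "subset_avg G i (\<lambda>T. F T + H T) = subset_avg G i F + subset_avg G i H"
  unfolding subset_avg_def by (simp add: sum.distrib add_divide_distrib)

lemma subset_avg_cmult: "subset_avg G i (\<lambda>T. c * F T) = c * subset_avg G i F"
  unfolding subset_avg_def by (simp add: sum_distrib_left[symmetric])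

lemma subset_avg_uminus: "subset_avg G i (\<lambda>T. - F T) = - subset_avg G i F"
  unfolding subset_avg_def by (simp add: sum_negf)

lemma sum_subsets_of_size_eq_avg:
  "finite G \<Longrightarrow> (\<Sum>T\<in>subsets_of_size G i. F T) = real (card (subsets_of_size G i)) * subset_avg G i F"
  unfolding subset_avg_def by (cases "card (subsets_of_size G i) = 0") auto

lemma sum_avoid_ind_mult:
  assumes "finite G"
  shows "(\<Sum>T\<in>subsets_of_size G i. avoid_ind B T * F T) = (\<Sum>T\<in>subsets_of_size (G - B) i. F T)"
proof -
  have "(\<Sum>T\<in>subsets_of_size G i. avoid_ind B T * F T)
      = (\<Sum>T\<in>subsets_of_size G i. if B \<inter> T = {} then F T else 0)"
    unfolding avoid_ind_def by (intro sum.cong) auto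
  also have "\<dots> = (\<Sum>T\<in>subsets_of_size (G - B) i. F T)"
    using assms by (simp add: sum.inter_filter subsets_of_size_Diff)
  finally show ?thesis .
qed

lemma subset_avg_avoid_ind:
  "finite G \<Longrightarrow> subset_avg G i (avoid_ind B)
     = real (card (subsets_of_size (G - B) i)) / real (card (subsets_of_size G i))"
  using sum_avoid_ind_mult[where F="\<lambda>_. 1" and G=G and B=B and i=i] unfolding subset_avg_def by simp

lemma subset_avg_avoid_ind_bounds:
  assumes "finite G"
  shows "0 \<le> subset_avg G i (avoid_ind B)" "subset_avg G i (avoid_ind B) \<le> 1"
proof -
  have "card (subsets_of_size (G - B) i) \<le> card (subsets_of_size G i)"
    unfolding subsets_of_size_Diff using assms by (intro card_mono) auto
  then show "0 \<le> subset_avg G i (avoid_ind B)" "subset_avg G i (avoid_ind B) \<le> 1"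
    using assms by (auto simp: subset_avg_avoid_ind divide_le_eq_1)
qed

lemma subset_avg_avoid_ind_mult:
  assumes "finite G"
  shows "subset_avg G i (\<lambda>T. avoid_ind B T * F T)
           = subset_avg G i (avoid_ind B) * subset_avg (G - B) i F"
proof -
  have "subset_avg G i (\<lambda>T. avoid_ind B T * F T)
      = real (card (subsets_of_size (G - B) i)) * subset_avg (G - B) i F
        / real (card (subsets_of_size G i))"
    unfolding subset_avg_def[of G] sum_avoid_ind_mult[OF assms]
      sum_subsets_of_size_eq_avg[OF finite_Diff[OF assms]] ..
  then show ?thesis by (simp add: subset_avg_avoid_ind[OF assms])
qed

lemma subset_avg_le_Diff:
  fixes F :: "'a set \<Rightarrow> real"
  assumes fin: "finite G" and i: "i \<le> card (G - B)"
    and mono: "\<And>T T'. T \<subseteq> T' \<Longrightarrow> F T \<le> F T'"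
    and indep: "\<And>x T. x \<in> B \<Longrightarrow> F (insert x T) = F T"
  shows "subset_avg G i F \<le> subset_avg (G - B) i F"
proof -
  have "G = (G - B) \<union> (G \<inter> B)" by auto
  then show ?thesis
    using subset_avg_Un_le[of "G \<inter> B" "G - B" i F] fin i mono indep by auto
qed

text \<open>Conditioning a uniform i-subset on avoiding B means sampling from G - B, which can only
  increase the average of a decreasing function that ignores B.\<close>

lemma subset_avg_avoid_ind_mult_le:
  fixes F :: "'a set \<Rightarrow> real"
  assumes fin: "finite G"
    and anti: "\<And>T T'. T \<subseteq> T' \<Longrightarrow> F T' \<le> F T"
    and indep: "\<And>x T. x \<in> B \<Longrightarrow> F (insert x T) = F T"
  shows "subset_avg G i (\<lambda>T. avoid_ind B T * F T) \<le> subset_avg G i (avoid_ind B) * subset_avg G i F"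
proof (cases "i \<le> card (G - B)")
  case True
  have "subset_avg G i (\<lambda>T. - F T) \<le> subset_avg (G - B) i (\<lambda>T. - F T)"
    by (rule subset_avg_le_Diff[OF fin True]) (use anti indep in auto)
  then show ?thesis
    using subset_avg_avoid_ind_bounds(1)[OF fin]
    by (simp add: subset_avg_avoid_ind_mult[OF fin] subset_avg_uminus mult_left_mono)
next
  case False
  then have "subset_avg G i (avoid_ind B) = 0"
    using fin by (simp add: subset_avg_avoid_ind card_subsets_of_size binomial_eq_0)
  then show ?thesis by (simp add: subset_avg_avoid_ind_mult[OF fin])
qed

text \<open>Negative correlation of the avoidance events of a disjoint family, in the form of an
  exponential moment bound: each factor 1 + c Y is monotone in T with a direction fixed by
  the sign of c, so c times the remaining product is always decreasing.\<close>

lemma subset_avg_prod_avoid_le: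
  fixes c :: real
  assumes fin: "finite G" and finJ: "finite J" and c: "c \<ge> -1" and disj: "disjoint_family_on B J"
  shows "subset_avg G i (\<lambda>T. \<Prod>v\<in>J. 1 + c * avoid_ind (B v) T)
           \<le> (\<Prod>v\<in>J. 1 + c * subset_avg G i (avoid_ind (B v)))"
  using finJ disj
proof (induction J rule: finite_induct)
  case empty
  then show ?case unfolding subset_avg_def by (auto simp: divide_le_eq_1)
next
  case (insert m J)
  define P where "P T = (\<Prod>v\<in>J. 1 + c * avoid_ind (B v) T)" for T
  define am where "am = subset_avg G i (avoid_ind (B m))"
  have factor_nonneg: "0 \<le> 1 + c * avoid_ind B' T" for B' T
    using c by (auto simp: avoid_ind_def)
  have am: "0 \<le> am" "am \<le> 1" using subset_avg_avoid_ind_bounds[OF fin] by (simp_all add: am_def)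
  then have "-1 * am \<le> c * am" using c by (intro mult_right_mono)
  then have "0 \<le> 1 + c * am" using am by linarith
  moreover have "subset_avg G i P \<le> (\<Prod>v\<in>J. 1 + c * subset_avg G i (avoid_ind (B v)))"
    unfolding P_def using insert.IH insert.prems disjoint_family_on_mono[of J "insert m J"] by blast
  ultimately have IH: "(1 + c * am) * subset_avg G i P
      \<le> (1 + c * am) * (\<Prod>v\<in>J. 1 + c * subset_avg G i (avoid_ind (B v)))"
    by (rule mult_left_mono[rotated])
  have indep: "c * P (insert x T) = c * P T" if "x \<in> B m" for x T
  proof -
    have "x \<notin> B v" if "v \<in> J" for v
      using insert.prems insert.hyps(2) \<open>x \<in> B m\<close> that
      unfolding disjoint_family_on_def by (metis disjoint_iff insertCI)
    then show ?thesis unfolding P_def avoid_ind_def by (intro arg_cong[where f="(*) c"] prod.cong) auto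
  qed
  have anti: "c * P T' \<le> c * P T" if "T \<subseteq> T'" for T T'
  proof (cases "c \<ge> 0")
    case True
    then have "P T' \<le> P T" unfolding P_def using that
      by (intro prod_mono conjI factor_nonneg) (auto simp: avoid_ind_def)
    then show ?thesis using True by (rule mult_left_mono)
  next
    case False
    then have "P T \<le> P T'" unfolding P_def using that
      by (intro prod_mono conjI factor_nonneg) (auto simp: avoid_ind_def)
    then show ?thesis using False by (simp add: mult_left_mono_neg)
  qed
  have "subset_avg G i (\<lambda>T. \<Prod>v\<in>insert m J. 1 + c * avoid_ind (B v) T)
      = subset_avg G i P + subset_avg G i (\<lambda>T. avoid_ind (B m) T * (c * P T))"
    using insert.hyps by (simp add: P_def[abs_def] algebra_simps subset_avg_add)
  also have "\<dots> \<le> subset_avg G i P + am * (c * subset_avg G i P)"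
    using subset_avg_avoid_ind_mult_le[OF fin anti indep] by (simp add: am_def subset_avg_cmult)
  also have "\<dots> = (1 + c * am) * subset_avg G i P" by (simp add: algebra_simps)
  also have "\<dots> \<le> (\<Prod>v\<in>insert m J. 1 + c * subset_avg G i (avoid_ind (B v)))"
    using IH insert.hyps by (simp add: am_def)
  finally show ?case .
qed

section \<open>Concentration of avoidance counts\<close>

lemma bernoulli_mgf_le:
  fixes l p :: real
  assumes p: "0 \<le> p" "p \<le> 1"
  shows "exp (- l * p) * (1 + (exp l - 1) * p) \<le> exp (l\<^sup>2 / 8)"
proof -
  have nonneg_case: "exp (- l * p) * (1 + (exp l - 1) * p) \<le> exp (l\<^sup>2 / 8)"
    if "0 \<le> l" "0 \<le> p" for l p :: real
  proof -
    have pos: "0 < 1 + p * (exp l - 1)" using that by (intro add_pos_nonneg) auto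
    have "exp (- l * p + ln (1 + p * (exp l - 1))) \<le> exp (l\<^sup>2 / 8)"
      using Hoeffdings_lemma_aux[OF that] by simp
    moreover have "exp (- l * p + ln (1 + p * (exp l - 1))) = exp (- l * p) * (1 + (exp l - 1) * p)"
      using pos by (simp only: exp_add exp_ln) (simp add: mult.commute)
    ultimately show ?thesis by linarith
  qed
  show ?thesis
  proof (cases "l \<ge> 0")
    case True
    then show ?thesis using nonneg_case p by blast
  next
    case False
    \<comment> \<open>Replace (l, p) by (-l, 1 - p): the left-hand side is invariant.\<close>
    have "exp (- l * p) * (1 + (exp l - 1) * p) = exp (l * (1 - p)) * (1 + (exp (- l) - 1) * (1 - p))"
      by (simp add: algebra_simps exp_minus exp_diff field_simps)
    also have "\<dots> \<le> exp ((- l)\<^sup>2 / 8)" using nonneg_case[of "- l" "1 - p"] False p by simp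
    finally show ?thesis by simp
  qed
qed

definition avoid_dev :: "'a set \<Rightarrow> nat \<Rightarrow> 'b set \<Rightarrow> ('b \<Rightarrow> 'a set) \<Rightarrow> 'a set \<Rightarrow> real" where
  "avoid_dev G i J B T = (\<Sum>v\<in>J. avoid_ind (B v) T - subset_avg G i (avoid_ind (B v)))"

lemma subset_avg_exp_avoid_dev_le:
  fixes l :: real
  assumes fin: "finite G" and finJ: "finite J" and disj: "disjoint_family_on B J"
  shows "subset_avg G i (\<lambda>T. exp (l * avoid_dev G i J B T)) \<le> exp (real (card J) * l\<^sup>2 / 8)"
proof -
  define p where "p v = subset_avg G i (avoid_ind (B v))" for v
  have p01: "0 \<le> p v" "p v \<le> 1" for v using subset_avg_avoid_ind_bounds[OF fin] by (auto simp: p_def)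
  have exp_avoid: "exp (l * avoid_ind B' T) = 1 + (exp l - 1) * avoid_ind B' T" for B' T
    by (simp add: avoid_ind_def)
  have factor: "exp (l * (avoid_ind (B v) T - p v))
      = exp (- l * p v) * (1 + (exp l - 1) * avoid_ind (B v) T)" for v T
    unfolding exp_avoid[symmetric] by (simp add: algebra_simps flip: exp_add)
  have "exp (l * avoid_dev G i J B T) =
        (\<Prod>v\<in>J. exp (- l * p v)) * (\<Prod>v\<in>J. 1 + (exp l - 1) * avoid_ind (B v) T)" for T
  proof -
    have "avoid_dev G i J B T = (\<Sum>v\<in>J. avoid_ind (B v) T - p v)"
      by (simp add: avoid_dev_def p_def)
    then have "exp (l * avoid_dev G i J B T) = (\<Prod>v\<in>J. exp (l * (avoid_ind (B v) T - p v)))"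
      using finJ by (simp add: sum_distrib_left exp_sum)
    then show ?thesis by (simp only: factor prod.distrib)
  qed
  then have "subset_avg G i (\<lambda>T. exp (l * avoid_dev G i J B T))
      = (\<Prod>v\<in>J. exp (- l * p v)) * subset_avg G i (\<lambda>T. \<Prod>v\<in>J. 1 + (exp l - 1) * avoid_ind (B v) T)"
    by (simp add: subset_avg_cmult)
  also have "\<dots> \<le> (\<Prod>v\<in>J. exp (- l * p v)) * (\<Prod>v\<in>J. 1 + (exp l - 1) * p v)"
    unfolding p_def
    by (intro mult_left_mono subset_avg_prod_avoid_le[OF fin finJ _ disj] prod_nonneg) auto
  also have "\<dots> = (\<Prod>v\<in>J. exp (- l * p v) * (1 + (exp l - 1) * p v))"
    by (simp add: prod.distrib)
  also have "\<dots> \<le> (\<Prod>v\<in>J. exp (l\<^sup>2 / 8))"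
  proof (intro prod_mono conjI)
    fix v
    have "-1 * p v \<le> (exp l - 1) * p v" using p01[of v] by (intro mult_right_mono) auto
    then show "0 \<le> exp (- l * p v) * (1 + (exp l - 1) * p v)" using p01[of v] by simp
    show "exp (- l * p v) * (1 + (exp l - 1) * p v) \<le> exp (l\<^sup>2 / 8)"
      using bernoulli_mgf_le[OF p01] .
  qed
  also have "\<dots> = exp (real (card J) * l\<^sup>2 / 8)"
    by (simp add: exp_of_nat_mult[symmetric])
  finally show ?thesis .
qed

lemma card_avoid_dev_ge_le:
  fixes l L :: real
  assumes fin: "finite G" and finJ: "finite J" and disj: "disjoint_family_on B J"
    and E: "E \<subseteq> subsets_of_size G i" and large: "\<And>T. T \<in> E \<Longrightarrow> L \<le> l * avoid_dev G i J B T"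
  shows "real (card E) \<le> real (card (subsets_of_size G i)) * exp (real (card J) * l\<^sup>2 / 8 - L)"
proof -
  have finE: "finite E" using E fin finite_subset finite_subsets_of_size by blast
  have "real (card E) * exp L = (\<Sum>T\<in>E. exp L)" by simp
  also have "\<dots> \<le> (\<Sum>T\<in>E. exp (l * avoid_dev G i J B T))"
    by (intro sum_mono) (use large in auto)
  also have "\<dots> \<le> (\<Sum>T\<in>subsets_of_size G i. exp (l * avoid_dev G i J B T))"
    by (rule sum_mono2) (use fin E in auto)
  also have "\<dots> = real (card (subsets_of_size G i)) * subset_avg G i (\<lambda>T. exp (l * avoid_dev G i J B T))"
    by (rule sum_subsets_of_size_eq_avg[OF fin])
  also have "\<dots> \<le> real (card (subsets_of_size G i)) * exp (real (card J) * l\<^sup>2 / 8)"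
    by (intro mult_left_mono subset_avg_exp_avoid_dev_le[OF fin finJ disj]) auto
  finally show ?thesis by (simp add: exp_diff pos_le_divide_eq)
qed

lemma card_avoid_dev_tail_le:
  fixes s :: real
  assumes fin: "finite G" and finJ: "finite J" and disj: "disjoint_family_on B J"
    and JM: "card J \<le> M" and s: "s > 0"
  shows "real (card {T\<in>subsets_of_size G i. s \<le> \<bar>avoid_dev G i J B T\<bar>})
           \<le> 2 * real (card (subsets_of_size G i)) * exp (- 2 * s\<^sup>2 / real M)"
proof (cases "J = {}")
  case True
  then show ?thesis using s by (simp add: avoid_dev_def)
next
  case False
  define m where "m = real (card J)"
  define l where "l = 4 * s / m"
  define K where "K = real (card (subsets_of_size G i))"
  have m: "m > 0" using finJ False by (simp add: m_def card_gt_0_iff)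
  have l: "l > 0" using s m by (simp add: l_def)
  have exponent: "m * l\<^sup>2 / 8 - l * s = - 2 * s\<^sup>2 / m"
    using m by (simp add: l_def power2_eq_square field_simps)
  define E1 where "E1 = {T\<in>subsets_of_size G i. s \<le> avoid_dev G i J B T}"
  define E2 where "E2 = {T\<in>subsets_of_size G i. avoid_dev G i J B T \<le> - s}"
  have neg: "l * s \<le> - l * x" if "x \<le> - s" for x
    using mult_left_mono[OF that, of l] l by simp
  have "real (card E1) \<le> K * exp (m * l\<^sup>2 / 8 - l * s)"
    unfolding K_def m_def
    by (rule card_avoid_dev_ge_le[OF fin finJ disj]) (use l in \<open>auto simp: E1_def\<close>)
  moreover have "real (card E2) \<le> K * exp (m * (- l)\<^sup>2 / 8 - l * s)"
    unfolding K_def m_def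
    by (rule card_avoid_dev_ge_le[OF fin finJ disj]) (use neg in \<open>auto simp: E2_def\<close>)
  moreover have "card {T\<in>subsets_of_size G i. s \<le> \<bar>avoid_dev G i J B T\<bar>} \<le> card E1 + card E2"
    by (rule order_trans[OF card_mono card_Un_le]) (auto simp: E1_def E2_def fin abs_if)
  then have "real (card {T\<in>subsets_of_size G i. s \<le> \<bar>avoid_dev G i J B T\<bar>})
      \<le> real (card E1) + real (card E2)"
    by (metis of_nat_add of_nat_le_iff)
  ultimately have "real (card {T\<in>subsets_of_size G i. s \<le> \<bar>avoid_dev G i J B T\<bar>})
      \<le> 2 * K * exp (- 2 * s\<^sup>2 / m)"
    unfolding power2_minus exponent by linarith
  also have "\<dots> \<le> 2 * K * exp (- 2 * s\<^sup>2 / real M)"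
    using m JM by (intro mult_left_mono) (auto simp: K_def m_def intro: divide_left_mono)
  finally show ?thesis by (simp add: K_def)
qed

lemma greedy_colouring:
  fixes D :: nat
  assumes finV: "finite V" and sym: "\<And>u v. R u v \<longleftrightarrow> R v u"
    and deg: "\<forall>v\<in>V. card {u\<in>V. u \<noteq> v \<and> R u v} \<le> D"
  shows "\<exists>col. (\<forall>v\<in>V. col v \<le> D) \<and> (\<forall>u\<in>V. \<forall>v\<in>V. u \<noteq> v \<and> R u v \<longrightarrow> col u \<noteq> col v)"
  using finV deg
proof (induction V rule: finite_induct)
  case empty
  then show ?case by auto
next
  case (insert x F)
  have degF: "\<forall>v\<in>F. card {u\<in>F. u \<noteq> v \<and> R u v} \<le> D"
  proof
    fix v assume v: "v \<in> F"
    have "card {u\<in>F. u \<noteq> v \<and> R u v} \<le> card {u\<in>insert x F. u \<noteq> v \<and> R u v}"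
      by (intro card_mono) (use insert.hyps in auto)
    also have "\<dots> \<le> D" using insert.prems v by auto
    finally show "card {u\<in>F. u \<noteq> v \<and> R u v} \<le> D" .
  qed
  obtain col where "(\<forall>v\<in>F. col v \<le> D) \<and> (\<forall>u\<in>F. \<forall>v\<in>F. u \<noteq> v \<and> R u v \<longrightarrow> col u \<noteq> col v)"
    using insert.IH[OF degF] ..
  then have col: "\<forall>v\<in>F. col v \<le> D" "\<forall>u\<in>F. \<forall>v\<in>F. u \<noteq> v \<and> R u v \<longrightarrow> col u \<noteq> col v"
    by blast+
  define N where "N = {u\<in>F. u \<noteq> x \<and> R u x}"
  have finN: "finite N" using insert.hyps(1) by (simp add: N_def)
  have "card N \<le> card {u\<in>insert x F. u \<noteq> x \<and> R u x}"
    unfolding N_def by (intro card_mono) (use insert.hyps in auto)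
  also have "\<dots> \<le> D" using insert.prems by auto
  finally have "card (col ` N) < card {0..D}"
    using card_image_le[OF finN, of col] by simp
  then have "\<not> {0..D} \<subseteq> col ` N"
    using card_mono[of "col ` N" "{0..D}"] finN by auto
  then obtain c where "c \<in> {0..D}" "c \<notin> col ` N" by blast
  then have c: "c \<le> D" "c \<notin> col ` N" by auto
  have "(col(x := c)) u \<noteq> (col(x := c)) v"
    if uv: "u \<in> insert x F" "v \<in> insert x F" "u \<noteq> v" "R u v" for u v
  proof (cases "u = x")
    case True
    then have "v \<in> N" using uv sym by (auto simp: N_def)
    then show ?thesis using True uv c by auto
  next
    case False
    show ?thesis
    proof (cases "v = x")
      case True
      then have "u \<in> N" using uv False by (auto simp: N_def)
      then show ?thesis using True uv c by auto
    next
      case False2: False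
      then show ?thesis using False uv col by auto
    qed
  qed
  moreover have "\<forall>v\<in>insert x F. (col(x := c)) v \<le> D" using col c by auto
  ultimately show ?case by blast
qed

text \<open>Colour the dependency graph properly with D + 1 colours: each colour class is a
  disjoint family, and a total deviation t forces a deviation t / (D + 1) in some class.\<close>

lemma card_avoid_dev_tail_le_degree:
  fixes t :: real
  assumes fin: "finite G" and finV: "finite V"
    and deg: "\<forall>v\<in>V. card {u\<in>V. u \<noteq> v \<and> B u \<inter> B v \<noteq> {}} \<le> D" and t: "t > 0"
  shows "real (card {T\<in>subsets_of_size G i. t \<le> \<bar>avoid_dev G i V B T\<bar>})
           \<le> 2 * real (Suc D) * real (card (subsets_of_size G i))
               * exp (- 2 * (t / real (Suc D))\<^sup>2 / real (card V))"
proof -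
  have "\<exists>col. (\<forall>v\<in>V. col v \<le> D) \<and>
      (\<forall>u\<in>V. \<forall>v\<in>V. u \<noteq> v \<and> B u \<inter> B v \<noteq> {} \<longrightarrow> col u \<noteq> col v)"
    by (rule greedy_colouring[OF finV]) (use deg in auto)
  then obtain col where col_le: "\<forall>v\<in>V. col v \<le> D"
    and col_proper: "\<forall>u\<in>V. \<forall>v\<in>V. u \<noteq> v \<and> B u \<inter> B v \<noteq> {} \<longrightarrow> col u \<noteq> col v"
    by auto
  define colour_class where "colour_class j = {v\<in>V. col v = j}" for j
  define s where "s = t / real (Suc D)"
  define Bad where "Bad j = {T\<in>subsets_of_size G i. s \<le> \<bar>avoid_dev G i (colour_class j) B T\<bar>}" for j
  have s: "s > 0" using t by (simp add: s_def)
  have split: "avoid_dev G i V B T = (\<Sum>j\<le>D. avoid_dev G i (colour_class j) B T)" for T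
    unfolding avoid_dev_def colour_class_def by (rule sum.group[symmetric]) (use finV col_le in auto)
  have "{T\<in>subsets_of_size G i. t \<le> \<bar>avoid_dev G i V B T\<bar>} \<subseteq> (\<Union>j\<le>D. Bad j)"
  proof (rule subsetI, rule ccontr)
    fix T assume T: "T \<in> {T\<in>subsets_of_size G i. t \<le> \<bar>avoid_dev G i V B T\<bar>}" "T \<notin> (\<Union>j\<le>D. Bad j)"
    have "\<bar>avoid_dev G i V B T\<bar> \<le> (\<Sum>j\<le>D. \<bar>avoid_dev G i (colour_class j) B T\<bar>)"
      unfolding split by (rule sum_abs)
    also have "\<dots> < (\<Sum>j\<le>D. s)"
      by (rule sum_strict_mono) (use T in \<open>auto simp: Bad_def not_le\<close>)
    also have "\<dots> = t" by (simp add: s_def)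
    finally show False using T by simp
  qed
  then have "card {T\<in>subsets_of_size G i. t \<le> \<bar>avoid_dev G i V B T\<bar>} \<le> card (\<Union>j\<le>D. Bad j)"
    by (rule card_mono[rotated]) (simp add: fin Bad_def)
  also have "\<dots> \<le> (\<Sum>j\<le>D. card (Bad j))" by (rule card_UN_le) simp
  finally have "real (card {T\<in>subsets_of_size G i. t \<le> \<bar>avoid_dev G i V B T\<bar>})
      \<le> (\<Sum>j\<le>D. real (card (Bad j)))"
    by (metis of_nat_le_iff of_nat_sum)
  also have "\<dots> \<le> (\<Sum>j\<le>D. 2 * real (card (subsets_of_size G i)) * exp (- 2 * s\<^sup>2 / real (card V)))"
  proof (intro sum_mono)
    fix j
    have sub: "colour_class j \<subseteq> V" by (auto simp: colour_class_def)
    have "disjoint_family_on B (colour_class j)"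
      using col_proper unfolding disjoint_family_on_def colour_class_def by fastforce
    then show "real (card (Bad j)) \<le> 2 * real (card (subsets_of_size G i)) * exp (- 2 * s\<^sup>2 / real (card V))"
      unfolding Bad_def
      by (rule card_avoid_dev_tail_le[OF fin finite_subset[OF sub finV] _ card_mono[OF finV sub] s])
  qed
  finally show ?thesis by (simp add: s_def algebra_simps)
qed

lemma power_diff_le_mult_diff:
  fixes a b :: real
  assumes "0 \<le> b" "b \<le> a" "a \<le> 1"
  shows "a ^ k - b ^ k \<le> real k * (a - b)"
proof (induction k)
  case 0
  then show ?case by simp
next
  case (Suc k)
  have "a ^ Suc k - b ^ Suc k = a * (a ^ k - b ^ k) + b ^ k * (a - b)"
    by (simp add: algebra_simps)
  also have "a * (a ^ k - b ^ k) \<le> 1 * (real k * (a - b))"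
    using Suc.IH assms by (intro mult_mono) (auto simp: power_mono)
  also have "b ^ k * (a - b) \<le> 1 * (a - b)"
    by (rule mult_right_mono) (use assms in \<open>auto intro: power_le_one\<close>)
  finally show ?case by (simp add: algebra_simps)
qed

text \<open>C(N - k, i) / C(N, i) is the probability that a uniform i-subset of an N-set avoids k fixed
  elements; it is a product of k factors lying between d - k / N and d.\<close>

lemma choose_ratio_bounds:
  fixes N i k :: nat
  assumes ik: "i + k \<le> N" and N: "0 < N"
  defines "d \<equiv> (real N - real i) / real N"
  shows "(d - real k / real N) ^ k \<le> real (N - k choose i) / real (N choose i)"
    and "real (N - k choose i) / real (N choose i) \<le> d ^ k"
proof -
  define g where "g u = real (N - u choose i) / real (N choose i)" for u
  have "d - real k / real N = (real N - real i - real k) / real N"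
    using N by (simp add: d_def diff_divide_distrib)
  moreover have "real i + real k \<le> real N" using ik by (simp flip: of_nat_add)
  ultimately have low_nonneg: "0 \<le> d - real k / real N" by simp
  have "(d - real k / real N) ^ u \<le> g u \<and> g u \<le> d ^ u" if "u \<le> k" for u
    using that
  proof (induction u)
    case 0
    then show ?case using ik by (simp add: g_def)
  next
    case (Suc u)
    define r where "r = real (N - u - i) / real (N - u)"
    have uN: "u < N" using Suc.prems ik by simp
    have NU: "real (N - u) > 0" using uN by simp
    have "(N - Suc u choose i) * (N - u) = (N - u choose i) * (N - u - i)"
      using binomial_absorb_comp[of "N - u" i] by (simp add: mult.commute)
    then have "real (N - Suc u choose i) * real (N - u) = real (N - u choose i) * real (N - u - i)"
      by (metis of_nat_mult)
    then have "real (N - Suc u choose i) = real (N - u choose i) * real (N - u - i) / real (N - u)"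
      using NU by (simp add: eq_divide_eq)
    then have step: "g (Suc u) = g u * r" unfolding g_def r_def by simp
    have upper: "r \<le> d"
    proof -
      have "real (N - u - i) * real N \<le> (real N - real i) * real (N - u)"
        using Suc.prems ik by (simp add: of_nat_diff algebra_simps)
      then show ?thesis using NU N by (simp add: r_def d_def field_simps)
    qed
    have lower: "d - real k / real N \<le> r"
    proof -
      have "d - real k / real N \<le> real (N - u - i) / real N"
        using Suc.prems ik N by (simp add: d_def of_nat_diff field_simps)
      also have "\<dots> \<le> r" unfolding r_def using uN by (intro divide_left_mono) auto
      finally show ?thesis .
    qed
    have "0 \<le> g u" "0 \<le> r" by (simp_all add: g_def r_def)
    moreover have "(d - real k / real N) ^ u \<le> g u" "g u \<le> d ^ u" using Suc by auto
    ultimately have "(d - real k / real N) ^ u * (d - real k / real N) \<le> g u * r"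
      and "g u * r \<le> d ^ u * d"
      using lower upper low_nonneg by (auto intro: mult_mono)
    then show ?case unfolding step by (simp add: mult.commute)
  qed
  then show "(d - real k / real N) ^ k \<le> real (N - k choose i) / real (N choose i)"
    and "real (N - k choose i) / real (N choose i) \<le> d ^ k"
    by (auto simp: g_def)
qed

lemma choose_ratio_approx:
  fixes N i k :: nat
  assumes "i + k \<le> N" "0 < N"
  defines "d \<equiv> (real N - real i) / real N"
  shows "d ^ k - real k * real k / real N \<le> real (N - k choose i) / real (N choose i)"
    and "real (N - k choose i) / real (N choose i) \<le> d ^ k"
proof -
  have "d - real k / real N = (real N - real i - real k) / real N"
    using assms by (simp add: d_def diff_divide_distrib)
  moreover have "real i + real k \<le> real N" using assms by (simp flip: of_nat_add)
  ultimately have "0 \<le> d - real k / real N" by simp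
  moreover have "d \<le> 1" using assms by (simp add: d_def)
  ultimately have "d ^ k - (d - real k / real N) ^ k \<le> real k * (real k / real N)"
    using power_diff_le_mult_diff[of "d - real k / real N" d k] by simp
  then show "d ^ k - real k * real k / real N \<le> real (N - k choose i) / real (N choose i)"
    using choose_ratio_bounds(1)[OF assms(1,2)] unfolding d_def by simp
  show "real (N - k choose i) / real (N choose i) \<le> d ^ k"
    using choose_ratio_bounds(2)[OF assms(1,2)] unfolding d_def .
qed

lemma square_scaled_powr_div:
  fixes x q a c :: real
  assumes x: "0 < x"
  shows "- 2 * (q * x powr (-a) * x / 2 / c)\<^sup>2 / x = - 2 * (q / (2 * c))\<^sup>2 * x powr (1 - 2 * a)"
proof -
  have "x powr (-a) * x = x powr (1 - a)" using x by (simp add: powr_diff powr_minus field_simps)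
  moreover have "(x powr (1 - a))\<^sup>2 = x powr (1 + (1 - 2 * a))"
    by (simp add: power2_eq_square powr_add[symmetric])
  moreover have "x powr (1 + (1 - 2 * a)) = x * x powr (1 - 2 * a)"
    using x powr_add[of x 1 "1 - 2 * a"] by (simp del: powr_add)
  ultimately show ?thesis using x by (simp add: power_divide power_mult_distrib mult.assoc)
qed

lemma poly_times_exp_le:
  fixes x K c b :: real and H :: nat
  assumes x: "0 < x" and K: "0 < K" and small: "(ln K + real H * ln x) / x powr b < c / 2"
  shows "K * x ^ H * exp (- c * x powr b) \<le> exp (- (c / 2) * x powr b)"
proof -
  have "ln K + real H * ln x < c / 2 * x powr b" using small x by (simp add: divide_less_eq)
  then have "exp (ln K + real H * ln x) < exp (c / 2 * x powr b)" by simp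
  moreover have "exp (ln K + real H * ln x) = K * x ^ H"
    using x K by (simp add: exp_add exp_of_nat_mult)
  ultimately have "K * x ^ H * exp (- c * x powr b) \<le> exp (c / 2 * x powr b) * exp (- c * x powr b)"
    by (intro mult_right_mono) auto
  also have "\<dots> = exp (- (c / 2) * x powr b)" by (simp flip: exp_add)
  finally show ?thesis .
qed

section \<open>Random orderings\<close>

lemma card_orderings_prefix_eq:
  assumes fin: "finite S" and T: "T \<in> subsets_of_size S i"
  shows "card {xs \<in> orderings S. set (take i xs) = T} = fact i * fact (card S - i)"
proof -
  have TS: "T \<subseteq> S" "card T = i" using T by (auto simp: subsets_of_size_def)
  have finT: "finite T" using TS fin finite_subset by blast
  have "bij_betw (\<lambda>xs. (take i xs, drop i xs)) {xs \<in> orderings S. set (take i xs) = T}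
      (permutations_of_set T \<times> permutations_of_set (S - T))"
  proof (rule bij_betw_byWitness[where f'="\<lambda>(ys, zs). ys @ zs"])
    show "\<forall>xs\<in>{xs \<in> orderings S. set (take i xs) = T}.
            (\<lambda>(ys, zs). ys @ zs) (take i xs, drop i xs) = xs"
      by simp
    show "\<forall>p\<in>permutations_of_set T \<times> permutations_of_set (S - T).
        (take i ((\<lambda>(ys, zs). ys @ zs) p), drop i ((\<lambda>(ys, zs). ys @ zs) p)) = p"
    proof
      fix p assume "p \<in> permutations_of_set T \<times> permutations_of_set (S - T)"
      then obtain ys zs where [simp]: "p = (ys, zs)" and ys: "set ys = T" "distinct ys"
        by (auto simp: permutations_of_set_def)
      have "length ys = i" using ys TS distinct_card by fastforce
      then show "(take i ((\<lambda>(ys, zs). ys @ zs) p), drop i ((\<lambda>(ys, zs). ys @ zs) p)) = p" by simp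
    qed
    show "(\<lambda>xs. (take i xs, drop i xs)) ` {xs \<in> orderings S. set (take i xs) = T}
        \<subseteq> permutations_of_set T \<times> permutations_of_set (S - T)"
    proof
      fix p assume "p \<in> (\<lambda>xs. (take i xs, drop i xs)) ` {xs \<in> orderings S. set (take i xs) = T}"
      then obtain xs where xs: "p = (take i xs, drop i xs)" "distinct xs" "set xs = S"
        "set (take i xs) = T"
        by (auto simp: orderings_def)
      have d: "distinct (take i xs @ drop i xs)" using xs by simp
      then have "set (take i xs) \<inter> set (drop i xs) = {}" by (simp only: distinct_append)
      moreover have "set (take i xs) \<union> set (drop i xs) = S"
        using xs(3) by (metis append_take_drop_id set_append)
      ultimately have "set (drop i xs) = S - T" using xs(4) by blast
      then show "p \<in> permutations_of_set T \<times> permutations_of_set (S - T)"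
        using xs d by (auto simp: permutations_of_set_def)
    qed
    show "(\<lambda>(ys, zs). ys @ zs) ` (permutations_of_set T \<times> permutations_of_set (S - T))
        \<subseteq> {xs \<in> orderings S. set (take i xs) = T}"
    proof
      fix xs assume "xs \<in> (\<lambda>(ys, zs). ys @ zs) ` (permutations_of_set T \<times> permutations_of_set (S - T))"
      then obtain ys zs where xs: "xs = ys @ zs" "set ys = T" "distinct ys" "set zs = S - T" "distinct zs"
        by (auto simp: permutations_of_set_def)
      have "length ys = i" using xs TS distinct_card by fastforce
      then show "xs \<in> {xs \<in> orderings S. set (take i xs) = T}"
        using xs TS by (auto simp: orderings_def)
    qed
  qed
  then have "card {xs \<in> orderings S. set (take i xs) = T}
      = card (permutations_of_set T \<times> permutations_of_set (S - T))"
    by (rule bij_betw_same_card)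
  also have "\<dots> = fact i * fact (card S - i)"
    using fin finT TS by (simp add: card_cartesian_product card_Diff_subset)
  finally show ?thesis .
qed

lemma orderings_eq_permutations_of_set: "orderings S = permutations_of_set S"
  unfolding orderings_def permutations_of_set_def by auto

lemma prob_prefix_set_in:
  assumes fin: "finite S" and Bad: "Bad \<subseteq> subsets_of_size S i" and i: "i \<le> card S"
  shows "measure_pmf.prob (pmf_of_set (orderings S)) {xs. set (take i xs) \<in> Bad}
           = real (card Bad) / real (card (subsets_of_size S i))"
proof -
  note orderings = orderings_eq_permutations_of_set
  have ne: "orderings S \<noteq> {}" "finite (orderings S)" using fin by (auto simp: orderings)
  have finB: "finite Bad" using Bad fin finite_subset finite_subsets_of_size by blast
  have "orderings S \<inter> {xs. set (take i xs) \<in> Bad}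
      = (\<Union>T\<in>Bad. {xs \<in> orderings S. set (take i xs) = T})"
    by auto
  then have "card (orderings S \<inter> {xs. set (take i xs) \<in> Bad})
      = (\<Sum>T\<in>Bad. card {xs \<in> orderings S. set (take i xs) = T})"
    by (simp only:) (rule card_UN_disjoint[OF finB], use ne in auto)
  also have "\<dots> = card Bad * (fact i * fact (card S - i))"
    using Bad by (simp add: card_orderings_prefix_eq[OF fin] subset_iff)
  finally have "measure_pmf.prob (pmf_of_set (orderings S)) {xs. set (take i xs) \<in> Bad}
      = real (card Bad * (fact i * fact (card S - i))) / real (fact (card S))"
    using measure_pmf_of_set[OF ne] fin by (simp add: orderings)
  also have "real (fact (card S)) = real (fact i * fact (card S - i)) * real (card (subsets_of_size S i))"
    using binomial_fact_lemma[OF i] by (simp add: card_subsets_of_size fin flip: of_nat_mult)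
  finally show ?thesis by simp
qed

lemma card_small_subsets_le:
  fixes n h :: nat
  assumes "0 < n"
  shows "card {A. A \<subseteq> {..<n} \<and> card A \<le> h} \<le> (h + 1) * n ^ h"
proof -
  have "{A. A \<subseteq> {..<n} \<and> card A \<le> h} = (\<Union>k\<le>h. subsets_of_size {..<n} k)"
    by (auto simp: subsets_of_size_def)
  then have "card {A. A \<subseteq> {..<n} \<and> card A \<le> h} \<le> (\<Sum>k\<le>h. card (subsets_of_size {..<n} k))"
    by (simp only: card_UN_le[of "{..h}"] finite_atMost)
  also have "\<dots> \<le> (\<Sum>k\<le>h. n ^ h)"
  proof (rule sum_mono)
    fix k assume k: "k \<in> {..h}"
    have "n choose k \<le> n ^ k"
      using binomial_fact_pow[of n k] by (metis dual_order.trans fact_ge_1 mult.right_neutral mult_le_mono2)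
    also have "n ^ k \<le> n ^ h" using k assms by (intro power_increasing) auto
    finally show "card (subsets_of_size {..<n} k) \<le> n ^ h" by (simp add: card_subsets_of_size)
  qed
  finally show ?thesis by simp
qed

section \<open>Steiner triple systems\<close>

locale steiner_system =
  fixes n :: nat and S :: "nat set set"
  assumes sts: "steiner_triple_system n S"
begin

lemma edgeD: "e \<in> S \<Longrightarrow> e \<subseteq> {..<n} \<and> card e = 3 \<and> finite e"
  using sts unfolding steiner_triple_system_def by (auto intro: finite_subset)

lemma finite_S: "finite S"
  by (rule finite_subset[of _ "Pow {..<n}"]) (use edgeD in auto)

definition triple :: "nat \<Rightarrow> nat \<Rightarrow> nat set" where
  "triple w v = (THE e. e \<in> S \<and> {w, v} \<subseteq> e)"

lemma triple:
  assumes "w < n" "v < n" "w \<noteq> v"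
  shows triple_in_S: "triple w v \<in> S"
    and pair_subset_triple: "{w, v} \<subseteq> triple w v"
    and triple_unique: "\<And>e. e \<in> S \<Longrightarrow> {w, v} \<subseteq> e \<Longrightarrow> e = triple w v"
proof -
  have ex: "\<exists>!e. e \<in> S \<and> {w, v} \<subseteq> e"
    using sts assms unfolding steiner_triple_system_def by simp
  then have "triple w v \<in> S \<and> {w, v} \<subseteq> triple w v" unfolding triple_def by (rule theI')
  then show "triple w v \<in> S" "{w, v} \<subseteq> triple w v" by auto
  show "e = triple w v" if "e \<in> S" "{w, v} \<subseteq> e" for e
    unfolding triple_def using the1_equality[OF ex] that by simp
qed

lemma pair_covered_iff:
  assumes "T \<subseteq> S" "w < n" "v < n" "w \<noteq> v"
  shows "(\<exists>e\<in>T. {w, v} \<subseteq> e) \<longleftrightarrow> triple w v \<in> T"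
proof
  assume "\<exists>e\<in>T. {w, v} \<subseteq> e"
  then show "triple w v \<in> T" using triple_unique[OF assms(2-4)] assms(1) by auto
qed (use pair_subset_triple[OF assms(2-4)] in auto)

lemma partial_system_subset: "H \<subseteq> S \<Longrightarrow> partial_system n H"
  unfolding partial_system_def
proof (intro conjI allI impI ballI)
  fix e assume "H \<subseteq> S" "e \<in> H"
  then show "e \<subseteq> {..<n}" "card e = 3" using edgeD by auto
next
  fix u v assume H: "H \<subseteq> S" and uv: "u < n" "v < n" "u \<noteq> v"
  have "{e \<in> H. {u, v} \<subseteq> e} \<subseteq> {triple u v}" using triple_unique[OF uv] H by auto
  then show "card {e \<in> H. {u, v} \<subseteq> e} \<le> 1" using card_mono[of "{triple u v}"] by fastforce
qed

lemma pairs_of_triples_disjoint: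
  assumes "e \<in> S" "e' \<in> S" "e \<noteq> e'"
  shows "subsets_of_size e 2 \<inter> subsets_of_size e' 2 = {}"
proof (rule ccontr)
  assume "subsets_of_size e 2 \<inter> subsets_of_size e' 2 \<noteq> {}"
  then obtain u v where uv: "{u, v} \<subseteq> e" "{u, v} \<subseteq> e'" "u \<noteq> v"
    by (auto simp: subsets_of_size_def card_2_iff)
  have "u < n" "v < n" using uv edgeD[OF assms(1)] by auto
  then have "e = triple u v" "e' = triple u v"
    using triple_unique[of u v] uv assms(1,2) by blast+
  then show False using assms(3) by simp
qed

lemma card_pairs_of_triples:
  assumes "T \<subseteq> S"
  shows "card (\<Union>e\<in>T. subsets_of_size e 2) = 3 * card T"
proof -
  have "finite T" using assms finite_S finite_subset by blast
  then have "card (\<Union>e\<in>T. subsets_of_size e 2) = (\<Sum>e\<in>T. card (subsets_of_size e 2))"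
  proof (rule card_UN_disjoint)
    show "\<forall>e\<in>T. finite (subsets_of_size e 2)" using assms edgeD by auto
    show "\<forall>e\<in>T. \<forall>e'\<in>T. e \<noteq> e' \<longrightarrow> subsets_of_size e 2 \<inter> subsets_of_size e' 2 = {}"
      using assms pairs_of_triples_disjoint by blast
  qed
  also have "\<dots> = (\<Sum>e\<in>T. 3)"
    using assms edgeD by (intro sum.cong) (auto simp: card_subsets_of_size numeral_3_eq_3 numeral_2_eq_2)
  finally show ?thesis by simp
qed

lemma pairs_of_triples_subset: "T \<subseteq> S \<Longrightarrow> (\<Union>e\<in>T. subsets_of_size e 2) \<subseteq> subsets_of_size {..<n} 2"
  using edgeD unfolding subsets_of_size_def by blast

lemma leave_edges_eq:
  assumes "set xs \<subseteq> S"
  shows "leave_edges n xs = subsets_of_size {..<n} 2 - (\<Union>e\<in>set xs. subsets_of_size e 2)"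
proof (rule set_eqI, rule iffI)
  fix p assume "p \<in> leave_edges n xs"
  then obtain u v where "p = {u, v}" "leave_adj n xs u v" unfolding leave_edges_def by blast
  then show "p \<in> subsets_of_size {..<n} 2 - (\<Union>e\<in>set xs. subsets_of_size e 2)"
    unfolding leave_adj_def subsets_of_size_def by auto
next
  fix p assume p: "p \<in> subsets_of_size {..<n} 2 - (\<Union>e\<in>set xs. subsets_of_size e 2)"
  then obtain u v where uv: "p = {u, v}" "u \<noteq> v"
    by (auto simp: subsets_of_size_def card_2_iff)
  then have "leave_adj n xs u v" using p unfolding leave_adj_def subsets_of_size_def by auto
  then show "p \<in> leave_edges n xs" using uv unfolding leave_edges_def by blast
qed

lemma choose_2_eq: "n choose 2 = 3 * card S"
proof -
  have "(\<Union>e\<in>S. subsets_of_size e 2) = subsets_of_size {..<n} 2"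
  proof (rule antisym[OF pairs_of_triples_subset[OF order_refl]], rule subsetI)
    fix p assume p: "p \<in> subsets_of_size {..<n} 2"
    then obtain u v where uv: "p = {u, v}" "u \<noteq> v"
      by (auto simp: subsets_of_size_def card_2_iff)
    then have "u < n" "v < n" using p by (auto simp: subsets_of_size_def)
    then show "p \<in> (\<Union>e\<in>S. subsets_of_size e 2)"
      using triple_in_S pair_subset_triple uv p unfolding subsets_of_size_def by blast
  qed
  then show ?thesis using card_pairs_of_triples[OF order_refl] by (simp add: card_subsets_of_size)
qed

lemma leave_density_eq:
  assumes xs: "set xs \<subseteq> S"
  shows "leave_density n xs = (real (card S) - real (card (set xs))) / real (card S)"
proof -
  have fin: "finite (\<Union>e\<in>set xs. subsets_of_size e 2)"
    using finite_subset[OF pairs_of_triples_subset[OF xs]] by simp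
  have "card (leave_edges n xs) = 3 * card S - 3 * card (set xs)"
    unfolding leave_edges_eq[OF xs] card_Diff_subset[OF fin pairs_of_triples_subset[OF xs]]
      card_pairs_of_triples[OF xs]
    by (simp add: card_subsets_of_size choose_2_eq)
  moreover have "card (set xs) \<le> card S" using xs finite_S by (rule card_mono[rotated])
  ultimately have "real (card (leave_edges n xs)) = 3 * (real (card S) - real (card (set xs)))"
    by (simp add: of_nat_diff)
  then show ?thesis unfolding leave_density_def choose_2_eq
    by (cases "card S = 0") (simp_all add: field_simps)
qed

definition link :: "nat set \<Rightarrow> nat \<Rightarrow> nat set set" where
  "link A v = (\<lambda>w. triple w v) ` A"

definition nbhd_count :: "nat set \<Rightarrow> nat set set \<Rightarrow> real" where
  "nbhd_count A T = (\<Sum>v\<in>{..<n} - A. avoid_ind (link A v) T)"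

lemma link_subset: "A \<subseteq> {..<n} \<Longrightarrow> v \<in> {..<n} - A \<Longrightarrow> link A v \<subseteq> S"
  unfolding link_def using triple_in_S by blast

text \<open>A vertex v outside A is a common neighbour of A in the leave of xs exactly when none of
  the triples joining v to A has been used.\<close>

lemma card_common_nbhd_eq:
  assumes xs: "set xs \<subseteq> S" and A: "A \<subseteq> {..<n}"
  shows "real (card (common_nbhd n xs A)) = nbhd_count A (set xs)"
proof -
  have adj: "leave_adj n xs w v \<longleftrightarrow> triple w v \<notin> set xs" if "w \<in> A" "v \<in> {..<n} - A" for w v
    using pair_covered_iff[OF xs, of w v] that A unfolding leave_adj_def by auto
  have "common_nbhd n xs A = {v\<in>{..<n} - A. link A v \<inter> set xs = {}}"
    unfolding common_nbhd_def link_def using adj by (auto simp: leave_adj_def)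
  then have "real (card (common_nbhd n xs A)) = (\<Sum>v\<in>{v\<in>{..<n} - A. link A v \<inter> set xs = {}}. 1)"
    by simp
  also have "\<dots> = nbhd_count A (set xs)"
    unfolding nbhd_count_def avoid_ind_def by (rule sum.inter_filter) simp
  finally show ?thesis .
qed

lemma card_link_overlap_le:
  assumes A: "A \<subseteq> {..<n}" and v: "v \<in> {..<n} - A"
  shows "card {u\<in>{..<n} - A. u \<noteq> v \<and> link A u \<inter> link A v \<noteq> {}} \<le> 3 * card A"
proof -
  have finA: "finite A" using A finite_subset by blast
  have "{u\<in>{..<n} - A. u \<noteq> v \<and> link A u \<inter> link A v \<noteq> {}} \<subseteq> \<Union>(link A v)"
  proof
    fix u assume u: "u \<in> {u\<in>{..<n} - A. u \<noteq> v \<and> link A u \<inter> link A v \<noteq> {}}"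
    then obtain w where w: "w \<in> A" "triple w u \<in> link A v" unfolding link_def by blast
    have "u \<in> triple w u" using pair_subset_triple[of w u] u w A by auto
    then show "u \<in> \<Union>(link A v)" using w by blast
  qed
  moreover have "finite (\<Union>(link A v))"
    using link_subset[OF A v] edgeD finA by (auto simp: link_def)
  ultimately have "card {u\<in>{..<n} - A. u \<noteq> v \<and> link A u \<inter> link A v \<noteq> {}} \<le> card (\<Union>(link A v))"
    by (rule card_mono[rotated])
  also have "\<dots> \<le> sum card (link A v)" by (rule card_Union_le_sum_card)
  also have "\<dots> = 3 * card (link A v)"
    using link_subset[OF A v] edgeD by (simp add: subset_iff)
  also have "\<dots> \<le> 3 * card A" unfolding link_def using card_image_le[OF finA] by simp
  finally show ?thesis .
qed

text \<open>The vertices lying in a triple spanned by two vertices of A; outside them the triples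
  joining v to different vertices of A are distinct.\<close>

definition exceptional :: "nat set \<Rightarrow> nat set" where
  "exceptional A = (\<Union>w\<in>A. \<Union>w'\<in>A - {w}. triple w w')"

lemma exceptional_subset: "A \<subseteq> {..<n} \<Longrightarrow> exceptional A \<subseteq> {..<n}"
  unfolding exceptional_def using edgeD triple_in_S by (blast dest: subsetD)

lemma card_exceptional_le:
  assumes A: "A \<subseteq> {..<n}"
  shows "card (exceptional A) \<le> 3 * card A * card A"
proof -
  have finA: "finite A" using A finite_subset by blast
  have "card (exceptional A) \<le> (\<Sum>w\<in>A. card (\<Union>w'\<in>A - {w}. triple w w'))"
    unfolding exceptional_def by (rule card_UN_le[OF finA])
  also have "\<dots> \<le> (\<Sum>w\<in>A. \<Sum>w'\<in>A - {w}. card (triple w w'))"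
    by (intro sum_mono card_UN_le) (use finA in auto)
  also have "\<dots> = (\<Sum>w\<in>A. \<Sum>w'\<in>A - {w}. 3)"
    using A edgeD triple_in_S by (intro sum.cong refl) (auto simp: subset_iff)
  also have "\<dots> \<le> (\<Sum>w\<in>A. 3 * card A)"
    by (intro sum_mono) (simp add: card_Diff_subset finA)
  finally show ?thesis by simp
qed

lemma card_link_eq:
  assumes A: "A \<subseteq> {..<n}" and v: "v \<in> {..<n} - A" "v \<notin> exceptional A"
  shows "card (link A v) = card A"
  unfolding link_def
proof (rule card_image, rule inj_onI, rule ccontr)
  fix w w' assume w: "w \<in> A" "w' \<in> A" "triple w v = triple w' v" "w \<noteq> w'"
  have "{w, v} \<subseteq> triple w v" "{w', v} \<subseteq> triple w' v" using pair_subset_triple w A v by auto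
  then have "triple w v = triple w w'"
    using triple_unique[of w w' "triple w v"] triple_in_S[of w v] w A v by auto
  then have "v \<in> triple w w'" using pair_subset_triple[of w v] w A v by auto
  then show False using v w unfolding exceptional_def by blast
qed

definition density_after :: "nat \<Rightarrow> real" where
  "density_after i = (real (card S) - real i) / real (card S)"

lemma subset_avg_avoid_link_nonexceptional:
  assumes A: "A \<subseteq> {..<n}" and v: "v \<in> {..<n} - A - exceptional A"
  shows "subset_avg S i (avoid_ind (link A v)) = real (card S - card A choose i) / real (card S choose i)"
proof -
  have "link A v \<subseteq> S" "card (link A v) = card A"
    using v link_subset[OF A] card_link_eq[OF A] by auto
  then show ?thesis
    by (simp add: subset_avg_avoid_ind[OF finite_S] card_subsets_of_size finite_S
        card_Diff_subset finite_subset[OF _ finite_S])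
qed

lemma card_nonexceptional_ge:
  assumes A: "A \<subseteq> {..<n}"
  shows "real n - real (card ({..<n} - A - exceptional A)) \<le> real (card A) + 3 * real (card A) ^ 2"
proof -
  have finX: "finite (exceptional A)" using exceptional_subset[OF A] finite_subset by blast
  have "n - card A = card ({..<n} - A)"
    using A finite_subset[OF A] by (simp add: card_Diff_subset)
  also have "\<dots> \<le> card (({..<n} - A - exceptional A) \<union> exceptional A)"
    by (rule card_mono) (auto simp: finX)
  also have "\<dots> \<le> card ({..<n} - A - exceptional A) + card (exceptional A)"
    by (rule card_Un_le)
  finally have "n \<le> card ({..<n} - A - exceptional A) + card (exceptional A) + card A" by linarith
  moreover have "card (exceptional A) \<le> 3 * card A ^ 2"
    using card_exceptional_le[OF A] by (simp add: power2_eq_square mult.assoc)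
  ultimately have "n \<le> card ({..<n} - A - exceptional A) + card A + 3 * card A ^ 2" by linarith
  then have "real n \<le> real (card ({..<n} - A - exceptional A) + card A + 3 * card A ^ 2)"
    by (simp only: of_nat_le_iff)
  then show ?thesis by simp
qed

text \<open>Outside the O(k^2) exceptional vertices every term of the sum equals the same binomial
  ratio, which is d^k up to an error k^2 / N.\<close>

lemma expected_nbhd_count_approx:
  assumes A: "A \<subseteq> {..<n}" and ik: "i + card A \<le> card S" and nN: "n \<le> card S"
  shows "\<bar>(\<Sum>v\<in>{..<n} - A. subset_avg S i (avoid_ind (link A v)))
            - real n * density_after i ^ card A\<bar> \<le> 4 * real (card A) ^ 2 + real (card A)"
proof (cases "n = 0")
  case True
  then show ?thesis by simp
next
  case False
  define k where "k = card A"
  define N where "N = card S"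
  define d where "d = density_after i"
  define f where "f = real (N - k choose i) / real (N choose i)"
  define V where "V = {..<n} - A"
  define X where "X = exceptional A"
  define p where "p v = subset_avg S i (avoid_ind (link A v))" for v
  define G where "G = real (card (V - X))"
  have N: "0 < N" using False nN by (simp add: N_def)
  have f: "d ^ k - real k * real k / real N \<le> f" "f \<le> d ^ k"
    using choose_ratio_approx[of i k N] ik N by (simp_all add: f_def d_def density_after_def k_def N_def)
  have d: "0 \<le> d" "d \<le> 1" using ik N by (auto simp: d_def density_after_def N_def divide_le_eq_1)
  have p01: "0 \<le> p v" "p v \<le> 1" for v
    using subset_avg_avoid_ind_bounds[OF finite_S] by (auto simp: p_def)
  have G: "G \<le> real n" "real n - G \<le> real k + 3 * (real k * real k)"
    using card_mono[of "{..<n}" "V - X"] card_nonexceptional_ge[OF A]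
    by (auto simp: G_def V_def X_def k_def power2_eq_square)
  have sum_split: "(\<Sum>v\<in>V. p v) = G * f + (\<Sum>v\<in>V \<inter> X. p v)"
    using sum.Int_Diff[of V p X] subset_avg_avoid_link_nonexceptional[OF A]
    by (simp add: V_def G_def X_def p_def f_def k_def N_def)
  have "finite X" using exceptional_subset[OF A] finite_subset unfolding X_def by blast
  then have "card (V \<inter> X) \<le> 3 * k * k"
    using card_mono[of X "V \<inter> X"] card_exceptional_le[OF A] unfolding X_def k_def by simp
  then have "real (card (V \<inter> X)) \<le> real (3 * k * k)" by (simp only: of_nat_le_iff)
  moreover have "(\<Sum>v\<in>V \<inter> X. p v) \<le> real (card (V \<inter> X))"
    using sum_mono[of "V \<inter> X" p "\<lambda>_. 1"] p01 by simp
  ultimately have "(\<Sum>v\<in>V \<inter> X. p v) \<le> 3 * (real k * real k)" by simp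
  then have exceptional_part: "0 \<le> (\<Sum>v\<in>V \<inter> X. p v)" "(\<Sum>v\<in>V \<inter> X. p v) \<le> 3 * (real k * real k)"
    using p01 by (simp_all add: sum_nonneg)
  have "G * f \<le> real n * d ^ k"
    using G f(2) by (intro mult_mono) (auto simp: G_def f_def)
  then have upper: "(\<Sum>v\<in>V. p v) - real n * d ^ k \<le> 3 * (real k * real k)"
    using sum_split exceptional_part by linarith
  have "G * (d ^ k - f) \<le> real n * (real k * real k / real N)"
    using G f by (intro mult_mono) (auto simp: G_def)
  moreover have "real n / real N * (real k * real k) \<le> 1 * (real k * real k)"
    using nN N by (intro mult_right_mono) (auto simp: N_def)
  moreover have "(real n - G) * d ^ k \<le> real n - G"
    using mult_left_mono[of "d ^ k" 1 "real n - G"] G d power_le_one by auto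
  moreover have "real n * d ^ k - G * f = (real n - G) * d ^ k + G * (d ^ k - f)"
    by (simp add: algebra_simps)
  ultimately have lower: "real n * d ^ k - (\<Sum>v\<in>V. p v) \<le> 4 * (real k * real k) + real k"
    using sum_split exceptional_part G by (simp add: field_simps)
  show ?thesis
    using upper lower
    unfolding V_def[symmetric] p_def[symmetric] d_def[symmetric] k_def[symmetric]
    by (simp add: abs_le_iff power2_eq_square)
qed

definition bad_subsets :: "real \<Rightarrow> nat \<Rightarrow> nat set \<Rightarrow> nat set set set" where
  "bad_subsets eps i A = {T\<in>subsets_of_size S i.
     \<not> ((1 - eps) * density_after i ^ card A * real n \<le> nbhd_count A T \<and>
        nbhd_count A T \<le> (1 + eps) * density_after i ^ card A * real n)}"

text \<open>The count deviates from its mean by at least the slack t left over after the bias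
  4 k^2 + k of the mean; the link of a vertex meets at most 3 k other links.\<close>

lemma card_bad_subsets_le:
  fixes eps :: real and A :: "nat set" and i :: nat
  defines "k \<equiv> card A"
  defines "t \<equiv> eps * density_after i ^ k * real n - (4 * real k ^ 2 + real k)"
  assumes A: "A \<subseteq> {..<n}" and ik: "i + k \<le> card S" and nN: "n \<le> card S" and t: "0 < t"
  shows "real (card (bad_subsets eps i A))
           \<le> 2 * real (Suc (3 * k)) * real (card (subsets_of_size S i))
               * exp (- 2 * (t / real (Suc (3 * k)))\<^sup>2 / real n)"
proof -
  define V where "V = {..<n} - A"
  define mu where "mu = (\<Sum>v\<in>V. subset_avg S i (avoid_ind (link A v)))"
  have mu: "\<bar>mu - real n * density_after i ^ k\<bar> \<le> 4 * real k ^ 2 + real k"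
    using expected_nbhd_count_approx[OF A] ik nN by (simp add: mu_def V_def k_def)
  have count: "nbhd_count A T = avoid_dev S i V (link A) T + mu" for T
    by (simp add: nbhd_count_def avoid_dev_def mu_def V_def sum_subtractf)
  have "(1 - eps) * density_after i ^ k * real n
      = real n * density_after i ^ k - eps * density_after i ^ k * real n"
    and "(1 + eps) * density_after i ^ k * real n
      = real n * density_after i ^ k + eps * density_after i ^ k * real n"
    by (simp_all add: algebra_simps)
  then have "t \<le> \<bar>avoid_dev S i V (link A) T\<bar>" if "T \<in> bad_subsets eps i A" for T
    using that mu unfolding bad_subsets_def count t_def k_def by (simp add: abs_le_iff) linarith
  then have "bad_subsets eps i A \<subseteq> {T\<in>subsets_of_size S i. t \<le> \<bar>avoid_dev S i V (link A) T\<bar>}"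
    by (auto simp: bad_subsets_def)
  then have "real (card (bad_subsets eps i A))
      \<le> real (card {T\<in>subsets_of_size S i. t \<le> \<bar>avoid_dev S i V (link A) T\<bar>})"
    by (intro of_nat_mono card_mono) (simp_all add: finite_S)
  also have "\<dots> \<le> 2 * real (Suc (3 * k)) * real (card (subsets_of_size S i))
               * exp (- 2 * (t / real (Suc (3 * k)))\<^sup>2 / real n)"
  proof (cases "V = {}")
    case True
    then have empty: "{T\<in>subsets_of_size S i. t \<le> \<bar>avoid_dev S i V (link A) T\<bar>} = {}"
      using t by (simp add: avoid_dev_def)
    show ?thesis by (simp only: empty card.empty) simp
  next
    case False
    then have "0 < card V" by (simp add: V_def card_gt_0_iff)
    moreover have "card V \<le> n" by (simp add: V_def card_Diff_subset_Int)
    ultimately have "2 * (t / real (Suc (3 * k)))\<^sup>2 / real n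
        \<le> 2 * (t / real (Suc (3 * k)))\<^sup>2 / real (card V)"
      by (intro divide_left_mono) auto
    then have exp_le: "exp (- 2 * (t / real (Suc (3 * k)))\<^sup>2 / real (card V))
        \<le> exp (- 2 * (t / real (Suc (3 * k)))\<^sup>2 / real n)"
      by simp
    have "\<forall>v\<in>V. card {u\<in>V. u \<noteq> v \<and> link A u \<inter> link A v \<noteq> {}} \<le> 3 * k"
      using card_link_overlap_le[OF A] by (simp add: V_def k_def)
    from card_avoid_dev_tail_le_degree[OF finite_S _ this t]
    show ?thesis
      by (rule order_trans[OF _ mult_left_mono[OF exp_le]]) (simp_all add: V_def)
  qed
  finally show ?thesis .
qed

lemma card_bad_subsets_le_uniform:
  fixes eps q :: real and A :: "nat set" and i h :: nat
  assumes A: "A \<subseteq> {..<n}" "card A \<le> h" and ik: "i + card A \<le> card S"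
    and nN: "n \<le> card S" and n: "0 < n" and eps: "0 \<le> eps"
    and q: "0 \<le> q" "q \<le> density_after i ^ card A"
    and large: "4 * real h ^ 2 + real h < q * eps * real n / 2"
  shows "real (card (bad_subsets eps i A))
           \<le> 2 * real (Suc (3 * h)) * real (card (subsets_of_size S i))
               * exp (- 2 * ((q * eps * real n / 2) / real (Suc (3 * h)))\<^sup>2 / real n)"
proof -
  define k where "k = card A"
  define t where "t = eps * density_after i ^ k * real n - (4 * real k ^ 2 + real k)"
  define s where "s = q * eps * real n / 2"
  have kh: "real k \<le> real h" using A(2) by (simp add: k_def)
  then have "real k ^ 2 \<le> real h ^ 2" by (intro power_mono) auto
  then have bias: "4 * real k ^ 2 + real k \<le> 4 * real h ^ 2 + real h" using kh by linarith
  have "q * (eps * real n) \<le> density_after i ^ k * (eps * real n)"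
    using q eps by (intro mult_right_mono) (auto simp: k_def)
  then have st: "s \<le> t" using large bias by (simp add: s_def t_def algebra_simps)
  have s: "0 < s" using large by (simp add: s_def) (smt (verit) of_nat_0_le_iff zero_le_power2)
  have "s / real (Suc (3 * h)) \<le> t / real (Suc (3 * k))"
    using st s A(2) by (intro frac_le) (auto simp: k_def)
  then have "(s / real (Suc (3 * h)))\<^sup>2 \<le> (t / real (Suc (3 * k)))\<^sup>2"
    using s by (intro power_mono) auto
  then have exp_le: "exp (- 2 * (t / real (Suc (3 * k)))\<^sup>2 / real n)
      \<le> exp (- 2 * (s / real (Suc (3 * h)))\<^sup>2 / real n)"
    using n by (simp add: divide_right_mono)
  have "real (card (bad_subsets eps i A))
      \<le> 2 * real (Suc (3 * k)) * real (card (subsets_of_size S i))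
          * exp (- 2 * (t / real (Suc (3 * k)))\<^sup>2 / real n)"
    using card_bad_subsets_le[OF A(1)] ik nN st s by (simp add: t_def k_def)
  also have "\<dots> \<le> 2 * real (Suc (3 * h)) * real (card (subsets_of_size S i))
          * exp (- 2 * (s / real (Suc (3 * h)))\<^sup>2 / real n)"
    using A(2) exp_le by (intro mult_mono) (auto simp: k_def)
  finally show ?thesis by (simp add: s_def)
qed

lemma not_in_O_qr_imp_bad_prefix:
  assumes xs: "xs \<in> orderings S" and m: "m \<le> card S"
    and fail: "\<not> in_O_qr eps h n m (take m xs)"
  shows "\<exists>i\<le>m. \<exists>A. A \<subseteq> {..<n} \<and> card A \<le> h \<and> set (take i xs) \<in> bad_subsets eps i A"
proof -
  have d: "distinct xs" "set xs = S" using xs by (auto simp: orderings_def)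
  then have len: "length xs = card S" using distinct_card by fastforce
  have "distinct (take m xs)" "length (take m xs) = m" "partial_system n (set (take m xs))"
    using d len m partial_system_subset[of "set (take m xs)"] set_take_subset[of m xs] by auto
  then obtain i where i: "i \<le> m" "\<not> quasirandom eps h n (take i (take m xs))"
    using fail unfolding in_O_qr_def by blast
  then have "\<not> quasirandom eps h n (take i xs)" by (simp add: min_absorb1)
  then obtain A where A: "A \<subseteq> {..<n}" "card A \<le> h"
    "\<not> ((1 - eps) * leave_density n (take i xs) ^ card A * real n \<le> real (card (common_nbhd n (take i xs) A)) \<and>
       real (card (common_nbhd n (take i xs) A)) \<le> (1 + eps) * leave_density n (take i xs) ^ card A * real n)"
    unfolding quasirandom_def by blast
  have sub: "set (take i xs) \<subseteq> S" using set_take_subset[of i xs] d(2) by simp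
  have card_prefix: "card (set (take i xs)) = i" using d i(1) m len by (simp add: distinct_card)
  then have "set (take i xs) \<in> subsets_of_size S i" using sub by (simp add: subsets_of_size_def)
  then have "set (take i xs) \<in> bad_subsets eps i A"
    using A(3) unfolding bad_subsets_def leave_density_eq[OF sub] card_common_nbhd_eq[OF sub A(1)]
      card_prefix density_after_def by simp
  then show ?thesis using i(1) A(1,2) by blast
qed

text \<open>Union bound over the at most (m + 1)(h + 1) n^h pairs (i, A).\<close>

lemma prob_not_in_O_qr_le:
  fixes eps q :: real and h m :: nat
  assumes m: "m + h \<le> card S" and nN: "n \<le> card S" and n: "0 < n" and eps: "0 \<le> eps"
    and q: "0 \<le> q" "\<And>i k. i \<le> m \<Longrightarrow> k \<le> h \<Longrightarrow> q \<le> density_after i ^ k"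
    and large: "4 * real h ^ 2 + real h < q * eps * real n / 2"
  defines "bound \<equiv> 2 * real (Suc (3 * h)) * exp (- 2 * ((q * eps * real n / 2) / real (Suc (3 * h)))\<^sup>2 / real n)"
  shows "measure_pmf.prob (pmf_of_set (orderings S)) {xs. \<not> in_O_qr eps h n m (take m xs)}
           \<le> real (Suc m) * real ((h + 1) * n ^ h) * bound"
proof -
  define Small where "Small = {A. A \<subseteq> {..<n} \<and> card A \<le> h}"
  define Prefix where "Prefix p = {xs. set (take (fst p) xs) \<in> bad_subsets eps (fst p) (snd p)}" for p
  let ?P = "measure_pmf.prob (pmf_of_set (orderings S))"
  have finSmall: "finite Small" by (rule finite_subset[of _ "Pow {..<n}"]) (auto simp: Small_def)
  have orderings: "set_pmf (pmf_of_set (orderings S)) = orderings S"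
    using finite_S by (simp add: orderings_eq_permutations_of_set permutations_of_set_nonempty)
  have cover: "{xs. \<not> in_O_qr eps h n m (take m xs)} \<inter> orderings S \<subseteq> (\<Union>p\<in>{..m} \<times> Small. Prefix p)"
  proof
    fix xs assume "xs \<in> {xs. \<not> in_O_qr eps h n m (take m xs)} \<inter> orderings S"
    then obtain i A where "i \<le> m" "A \<in> Small" "xs \<in> Prefix (i, A)"
      using not_in_O_qr_imp_bad_prefix[of xs m eps h] m unfolding Prefix_def Small_def by auto
    then show "xs \<in> (\<Union>p\<in>{..m} \<times> Small. Prefix p)" by blast
  qed
  have "?P {xs. \<not> in_O_qr eps h n m (take m xs)}
      = ?P ({xs. \<not> in_O_qr eps h n m (take m xs)} \<inter> orderings S)"
    using measure_Int_set_pmf[of "pmf_of_set (orderings S)"] orderings by simp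
  also have "\<dots> \<le> ?P (\<Union>p\<in>{..m} \<times> Small. Prefix p)"
    by (rule measure_pmf.finite_measure_mono[OF cover]) simp
  also have "\<dots> \<le> (\<Sum>p\<in>{..m} \<times> Small. ?P (Prefix p))"
    by (rule measure_pmf.finite_measure_subadditive_finite) (use finSmall in auto)
  also have "\<dots> \<le> (\<Sum>p\<in>{..m} \<times> Small. bound)"
  proof (rule sum_mono)
    fix p assume p: "p \<in> {..m} \<times> Small"
    then have "?P (Prefix p) = real (card (bad_subsets eps (fst p) (snd p)))
                                 / real (card (subsets_of_size S (fst p)))"
      unfolding Prefix_def using m by (intro prob_prefix_set_in finite_S) (auto simp: bad_subsets_def)
    also have "\<dots> \<le> bound"
      using card_bad_subsets_le_uniform[of "snd p" h "fst p" eps q] p m nN n eps q large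
      by (auto simp: Small_def bound_def card_subsets_of_size finite_S divide_le_eq mult.commute)
    finally show "?P (Prefix p) \<le> bound" .
  qed
  also have "\<dots> = real (Suc m) * real (card Small) * bound"
    using finSmall by (simp add: card_cartesian_product algebra_simps)
  also have "\<dots> \<le> real (Suc m) * real ((h + 1) * n ^ h) * bound"
  proof -
    have "real (card Small) \<le> real ((h + 1) * n ^ h)"
      using card_small_subsets_le[OF n, of h] unfolding Small_def by (simp only: of_nat_le_iff)
    then show ?thesis unfolding bound_def by (intro mult_right_mono mult_left_mono) auto
  qed
  finally show ?thesis .
qed

lemma card_S_bounds:
  assumes "7 \<le> n"
  shows "n \<le> card S" and "card S + 1 \<le> n ^ 2"
proof -
  have "even (n * (n - 1))" by (cases "even n") auto
  then have "2 * (n choose 2) = n * (n - 1)" unfolding choose_two by (rule dvd_mult_div_cancel)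
  then have six: "6 * card S = n * (n - 1)" by (simp add: choose_2_eq)
  have "n * 6 \<le> n * (n - 1)" using assms by (intro mult_le_mono2) simp
  then show "n \<le> card S" using six by linarith
  have "n * (n - 1) \<le> n * n" by (intro mult_le_mono2) simp
  moreover have "7 * 7 \<le> n * n" using mult_le_mono[OF assms assms] .
  ultimately have "card S + 1 \<le> n * n" using six by linarith
  then show "card S + 1 \<le> n ^ 2" by (simp add: power2_eq_square)
qed

lemma alphaN_le:
  assumes "0 \<le> \<alpha>"
  shows "real (alphaN \<alpha> n) \<le> \<alpha> * real (card S)"
proof -
  have "real (n choose 2) / 3 = real (card S)" using choose_2_eq by simp
  then show ?thesis using assms by (simp add: alphaN_def)
qed

lemma alphaN_bounds:
  assumes \<alpha>: "0 < \<alpha>" "\<alpha> < 1" and n7: "7 \<le> n" and hn: "real h < (1 - \<alpha>) * real n"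
  shows "alphaN \<alpha> n + h \<le> card S" and "Suc (alphaN \<alpha> n) \<le> n ^ 2"
    and "i \<le> alphaN \<alpha> n \<Longrightarrow> 1 - \<alpha> \<le> density_after i"
proof -
  note nS = card_S_bounds[OF n7]
  have m: "real (alphaN \<alpha> n) \<le> \<alpha> * real (card S)" using alphaN_le \<alpha> by simp
  have "(1 - \<alpha>) * real n \<le> (1 - \<alpha>) * real (card S)" using nS \<alpha> by (intro mult_left_mono) auto
  then show "alphaN \<alpha> n + h \<le> card S" using m hn by (simp add: algebra_simps)
  have "\<alpha> * real (card S) \<le> real (card S)" using \<alpha> by (intro mult_left_le_one_le) auto
  then show "Suc (alphaN \<alpha> n) \<le> n ^ 2" using m nS(2) by linarith
  assume "i \<le> alphaN \<alpha> n"
  then show "1 - \<alpha> \<le> density_after i"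
    using m nS n7 by (simp add: density_after_def field_simps)
qed

lemma prob_not_in_O_qr_alphaN_le:
  fixes h :: nat and \<alpha> a :: real
  defines "m \<equiv> alphaN \<alpha> n" and "q \<equiv> (1 - \<alpha>) ^ h"
  assumes \<alpha>: "0 < \<alpha>" "\<alpha> < 1" and n7: "7 \<le> n" and hn: "real h < (1 - \<alpha>) * real n"
    and large: "4 * real h ^ 2 + real h < q / 2 * real n powr (1 - a)"
  shows "measure_pmf.prob (pmf_of_set (orderings S))
           {xs. \<not> in_O_qr (real n powr (-a)) h n m (take m xs)}
         \<le> 2 * real (Suc (3 * h)) * real (h + 1) * real n ^ (h + 2)
             * exp (- 2 * (q / (2 * real (Suc (3 * h))))\<^sup>2 * real n powr (1 - 2 * a))"
proof -
  define eps where "eps = real n powr (-a)"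
  define c where "c = real (Suc (3 * h))"
  have n: "0 < n" using n7 by simp
  have q_le: "q \<le> density_after i ^ k" if "i \<le> m" "k \<le> h" for i k
  proof -
    have "(1 - \<alpha>) ^ k \<le> density_after i ^ k"
      using alphaN_bounds(3)[OF \<alpha> n7 hn] that \<alpha> by (intro power_mono) (auto simp: m_def)
    moreover have "q \<le> (1 - \<alpha>) ^ k" unfolding q_def using that \<alpha> by (intro power_decreasing) auto
    ultimately show ?thesis by simp
  qed
  have "0 \<le> q" using \<alpha> by (simp add: q_def)
  moreover have "4 * real h ^ 2 + real h < q * eps * real n / 2"
    using large n by (simp add: eps_def powr_diff powr_minus field_simps)
  ultimately have "measure_pmf.prob (pmf_of_set (orderings S)) {xs. \<not> in_O_qr eps h n m (take m xs)}
      \<le> real (Suc m) * real ((h + 1) * n ^ h)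
          * (2 * c * exp (- 2 * (q * eps * real n / 2 / c)\<^sup>2 / real n))"
    using alphaN_bounds(1)[OF \<alpha> n7 hn] card_S_bounds(1)[OF n7] n q_le
    unfolding c_def m_def by (intro prob_not_in_O_qr_le) (auto simp: eps_def)
  also have "\<dots> \<le> real (n ^ 2) * real ((h + 1) * n ^ h)
          * (2 * c * exp (- 2 * (q * eps * real n / 2 / c)\<^sup>2 / real n))"
    using alphaN_bounds(2)[OF \<alpha> n7 hn] unfolding m_def c_def
    by (intro mult_right_mono) (simp_all only: of_nat_le_iff, auto)
  finally show ?thesis
    using square_scaled_powr_div[of "real n" q a c] n
    by (simp add: eps_def c_def power_add power2_eq_square algebra_simps)
qed

end

theorem lemma2p6:
  fixes h :: nat and \<alpha> a :: real
  assumes "0 < \<alpha>" "\<alpha> < 1" "0 < a" "a < 1/2"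
  shows "\<exists>c>0. \<exists>n0. \<forall>n\<ge>n0. \<forall>S.
           (n mod 6 = 1 \<or> n mod 6 = 3) \<longrightarrow> steiner_triple_system n S \<longrightarrow>
           measure_pmf.prob (pmf_of_set (orderings S))
             {xs. \<not> in_O_qr (real n powr (-a)) h n (alphaN \<alpha> n) (take (alphaN \<alpha> n) xs)}
           \<le> exp (- c * real n powr (1 - 2 * a))"
proof -
  define q where "q = (1 - \<alpha>) ^ h"
  define c where "c = 2 * (q / (2 * real (Suc (3 * h))))\<^sup>2"
  define K where "K = 2 * real (Suc (3 * h)) * real (h + 1)"
  have q: "0 < q" and c: "0 < c" and K: "0 < K" using assms by (simp_all add: q_def c_def K_def)
  have "\<forall>\<^sub>F n in sequentially. 7 \<le> real n \<and> real h < (1 - \<alpha>) * real n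
      \<and> 4 * real h ^ 2 + real h < q / 2 * real n powr (1 - a)
      \<and> (ln K + real (h + 2) * ln (real n)) / real n powr (1 - 2 * a) < c / 2"
    using assms q c by (intro eventually_conj; real_asymp)
  then obtain n0 where n0: "\<And>n. n0 \<le> n \<Longrightarrow> 7 \<le> real n \<and> real h < (1 - \<alpha>) * real n
      \<and> 4 * real h ^ 2 + real h < q / 2 * real n powr (1 - a)
      \<and> (ln K + real (h + 2) * ln (real n)) / real n powr (1 - 2 * a) < c / 2"
    unfolding eventually_sequentially by blast
  have "measure_pmf.prob (pmf_of_set (orderings S))
          {xs. \<not> in_O_qr (real n powr (-a)) h n (alphaN \<alpha> n) (take (alphaN \<alpha> n) xs)}
        \<le> exp (- (c / 2) * real n powr (1 - 2 * a))"
    if "n0 \<le> n" and "steiner_triple_system n S" for n S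
  proof -
    interpret steiner_system n S by (rule steiner_system.intro) fact
    show ?thesis
      using prob_not_in_O_qr_alphaN_le[of \<alpha> h a] poly_times_exp_le[of "real n" K "h + 2" "1 - 2 * a" c]
        n0[OF that(1)] assms K
      by (simp add: q_def c_def K_def)
  qed
  then show ?thesis using c by (intro exI[of _ "c / 2"] conjI exI[of _ n0]) auto
qed

end
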